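(* Let $p\ge1$, $\phi_1,\dots,\phi_p:\mathbb Z\to\mathbb C$, and let $H(t,s)$ be the Green's function of $y_t=\sum_{l=1}^p\phi_l(t)y_{t-l}$. Then $H(t,s)=\xi_{t,s}$ for all integers $s$ and $t\ge s-p+1$. In particular, for $t>s$, $H(t,s)$ is the determinant of the $(t-s)\times(t-s)$ banded lower Hessenberg matrix whose $(i,j)$ entry is $-1$ if $j=i+1$, $\phi_{i-j+1}(s+i)$ if $1\le i-j+1\le p$, and $0$ otherwise.
   Context: For $t\in\mathbb Z$ let $\Gamma_t$ be the $p\times p$ companion matrix with first row $(\phi_1(t),\dots,\phi_p(t))$, entries $(i,i-1)$ equal to $1$ for $2\le i\le p$, and all other entries $0$. For $t>s$, $F_{t,s}=\Gamma_t\Gamma_{t-1}\cdots\Gamma_{s+1}$ and the Green's function $H(t,s)$ is the $(1,1)$ entry of $F_{t,s}$; by convention $H(s,s)=1$ and $H(t,s)=0$ for $s-p+1\le t<s$. Convention: $\phi_l=0$ for $l>p$. For $t>s$, $\Phi_{t,s}$ is the $(t-s)\times(t-s)$ matrix with $(i,j)$ entry $-1$ if $j=i+1$, $\phi_{i-j+1}(s+i)$ if $1\le j\le i$, $0$ if $j>i+1$; the principal determinant is $\xi_{t,s}=\det\Phi_{t,s}$ for $t>s$, $\xi_{s,s}=1$, and $\xi_{t,s}=0$ for $s-p+1\le t<s$. *)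

theory Defs
  imports Complex_Main "Jordan_Normal_Form.Determinant"
begin

definition phi_ext :: "nat \<Rightarrow> (nat \<Rightarrow> int \<Rightarrow> complex) \<Rightarrow> nat \<Rightarrow> int \<Rightarrow> complex" where
  "phi_ext p phi l t = (if 1 \<le> l \<and> l \<le> p then phi l t else 0)"

definition Gamma :: "nat \<Rightarrow> (nat \<Rightarrow> int \<Rightarrow> complex) \<Rightarrow> int \<Rightarrow> complex mat" where
  "Gamma p phi t = mat p p (\<lambda>(i, j). if i = 0 then phi_ext p phi (j + 1) t
                                      else if i = j + 1 then 1 else 0)"

fun Fprod :: "nat \<Rightarrow> (nat \<Rightarrow> int \<Rightarrow> complex) \<Rightarrow> int \<Rightarrow> nat \<Rightarrow> complex mat" where
  "Fprod p phi s 0 = 1\<^sub>m p"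
| "Fprod p phi s (Suc k) = Gamma p phi (s + int k + 1) * Fprod p phi s k"

definition F :: "nat \<Rightarrow> (nat \<Rightarrow> int \<Rightarrow> complex) \<Rightarrow> int \<Rightarrow> int \<Rightarrow> complex mat" where
  "F p phi t s = Fprod p phi s (nat (t - s))"

text \<open>Green's function (defined for t >= s - p + 1).\<close>
definition H :: "nat \<Rightarrow> (nat \<Rightarrow> int \<Rightarrow> complex) \<Rightarrow> int \<Rightarrow> int \<Rightarrow> complex" where
  "H p phi t s = (if t > s then F p phi t s $$ (0, 0) else if t = s then 1 else 0)"

text \<open>Phi_{t,s} (0-indexed: entry (i,j) here is the paper's entry (i+1,j+1)).\<close>
definition Phi :: "nat \<Rightarrow> (nat \<Rightarrow> int \<Rightarrow> complex) \<Rightarrow> int \<Rightarrow> int \<Rightarrow> complex mat" where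
  "Phi p phi t s = mat (nat (t - s)) (nat (t - s))
     (\<lambda>(i, j). if j = i + 1 then -1
               else if j \<le> i then phi_ext p phi (i - j + 1) (s + int i + 1)
               else 0)"

definition xi :: "nat \<Rightarrow> (nat \<Rightarrow> int \<Rightarrow> complex) \<Rightarrow> int \<Rightarrow> int \<Rightarrow> complex" where
  "xi p phi t s = (if t > s then det (Phi p phi t s) else if t = s then 1 else 0)"

end

theory Submission
  imports Defs
begin

text \<open>Both sides solve the same recursion with the same initial values. The first column of
  \<open>F(t,s)\<close> is \<open>(H(t,s), H(t-1,s), \<dots>, H(t-p+1,s))\<close>, since multiplying by the companion
  matrix \<open>\<Gamma>(t+1)\<close> shifts it down and puts the difference equation on top. Expanding the lower
  Hessenberg determinant \<open>\<xi>(t+1,s)\<close> along its last row gives the same difference equation: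
  deleting the last row and column \<open>j\<close> leaves a block-triangular matrix with diagonal blocks
  \<open>\<Phi>(s+j,s)\<close> and \<open>-1\<close>'s.\<close>

lemma det_lower_hessenberg_minor:
  fixes f :: "nat \<times> nat \<Rightarrow> 'a :: comm_ring_1"
  assumes sup: "\<And>i. f (i, Suc i) = -1"
    and above: "\<And>i j. j > Suc i \<Longrightarrow> f (i, j) = 0"
    and "j \<le> m"
  shows "det (mat_delete (mat (Suc m) (Suc m) f) m j) = (-1) ^ (m - j) * det (mat j j f)"
  using \<open>j \<le> m\<close>
proof (induction m)
  case 0
  then have "mat_delete (mat (Suc 0) (Suc 0) f) 0 j = mat j j f"
    by (auto simp: mat_delete_def)
  then show ?case using 0 by simp
next
  case (Suc m)
  show ?case
  proof (cases "j = Suc m")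
    case True
    then have "mat_delete (mat (Suc (Suc m)) (Suc (Suc m)) f) (Suc m) j = mat j j f"
      by (auto simp: mat_delete_def intro!: eq_matI)
    then show ?thesis using True by simp
  next
    case False
    then have jm: "j \<le> m" using Suc.prems by simp
    define N where "N = mat_delete (mat (Suc (Suc m)) (Suc (Suc m)) f) (Suc m) j"
    have N_carrier: "N \<in> carrier_mat (Suc m) (Suc m)"
      unfolding N_def mat_delete_def by auto
    have N_last_col: "N $$ (i, m) = (if i = m then -1 else 0)" if "i < Suc m" for i
      using that jm sup above by (auto simp: N_def mat_delete_def)
    have minor: "mat_delete N m m = mat_delete (mat (Suc m) (Suc m) f) m j"
      using jm by (auto simp: N_def mat_delete_def intro!: eq_matI)
    have "det N = (\<Sum>i<Suc m. N $$ (i, m) * cofactor N i m)"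
      by (rule laplace_expansion_column[OF N_carrier]) simp
    also have "\<dots> = - cofactor N m m"
      by (simp add: N_last_col if_distrib cong: if_cong)
    also have "\<dots> = - ((-1) ^ (m - j) * det (mat j j f))"
      using Suc.IH jm by (simp add: cofactor_def minor)
    also have "\<dots> = (-1) ^ (Suc m - j) * det (mat j j f)"
      using jm by (simp add: Suc_diff_le)
    finally show ?thesis unfolding N_def .
  qed
qed

lemma det_lower_hessenberg_last_row:
  fixes f :: "nat \<times> nat \<Rightarrow> 'a :: comm_ring_1"
  assumes sup: "\<And>i. f (i, Suc i) = -1"
    and above: "\<And>i j. j > Suc i \<Longrightarrow> f (i, j) = 0"
  shows "det (mat (Suc m) (Suc m) f) = (\<Sum>j<Suc m. f (m, j) * det (mat j j f))"
proof -
  have "det (mat (Suc m) (Suc m) f)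
      = (\<Sum>j<Suc m. mat (Suc m) (Suc m) f $$ (m, j) * cofactor (mat (Suc m) (Suc m) f) m j)"
    by (rule laplace_expansion_row) auto
  also have "\<dots> = (\<Sum>j<Suc m. f (m, j) * det (mat j j f))"
  proof (rule sum.cong)
    fix j assume "j \<in> {..<Suc m}"
    then have j: "j \<le> m" by simp
    have "(-1::'a) ^ (m + j) * (-1) ^ (m - j) = (-1) ^ (2 * m)"
      using j by (simp flip: power_add)
    then have sign: "(-1::'a) ^ (m + j) * (-1) ^ (m - j) = 1"
      by (simp add: power_mult)
    show "mat (Suc m) (Suc m) f $$ (m, j) * cofactor (mat (Suc m) (Suc m) f) m j
        = f (m, j) * det (mat j j f)"
      using j det_lower_hessenberg_minor[of f, OF sup above j] sign
      by (simp add: cofactor_def mult.assoc[symmetric])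
  qed simp
  finally show ?thesis .
qed

definition Phi_entry :: "nat \<Rightarrow> (nat \<Rightarrow> int \<Rightarrow> complex) \<Rightarrow> int \<Rightarrow> nat \<times> nat \<Rightarrow> complex" where
  "Phi_entry p phi s = (\<lambda>(i, j). if j = i + 1 then -1
                                 else if j \<le> i then phi_ext p phi (i - j + 1) (s + int i + 1)
                                 else 0)"

lemma xi_shift: "xi p phi (s + int n) s = det (mat n n (Phi_entry p phi s))"
  by (cases n) (simp_all add: xi_def Phi_def Phi_entry_def nat_add_distrib)

lemma xi_below: "t < s \<Longrightarrow> xi p phi t s = 0"
  by (simp add: xi_def)

lemma xi_recurrence:
  "xi p phi (s + int k + 1) s
     = (\<Sum>j<p. phi_ext p phi (j + 1) (s + int k + 1) * xi p phi (s + int k - int j) s)"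
proof -
  define a where "a j = phi_ext p phi (j + 1) (s + int k + 1) * xi p phi (s + int k - int j) s"
    for j
  have "xi p phi (s + int k + 1) s = det (mat (Suc k) (Suc k) (Phi_entry p phi s))"
    using xi_shift[of p phi s "Suc k"] by (simp add: ac_simps)
  also have "\<dots> = (\<Sum>j<Suc k. phi_ext p phi (k - j + 1) (s + int k + 1)
                                * det (mat j j (Phi_entry p phi s)))"
    by (subst det_lower_hessenberg_last_row) (auto simp: Phi_entry_def intro!: sum.cong)
  also have "\<dots> = (\<Sum>j<Suc k. a (k - j))"
    by (rule sum.cong) (auto simp: a_def of_nat_diff simp flip: xi_shift)
  also have "\<dots> = (\<Sum>j<Suc k. a j)"
    using sum.nat_diff_reindex[of a "Suc k"] by simp
  also have "\<dots> = (\<Sum>j<Suc k + p. a j)"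
    by (rule sum.mono_neutral_left) (auto simp: a_def xi_below)
  also have "\<dots> = (\<Sum>j<p. a j)"
    by (rule sum.mono_neutral_right) (auto simp: a_def phi_ext_def)
  finally show ?thesis unfolding a_def .
qed

lemma Fprod_carrier: "Fprod p phi s k \<in> carrier_mat p p"
  by (induction k) (auto simp: Gamma_def)

lemma Fprod_first_column:
  "i < p \<Longrightarrow> Fprod p phi s k $$ (i, 0) = xi p phi (s + int k - int i) s"
proof (induction k arbitrary: i)
  case 0
  then show ?case by (auto simp: xi_def)
next
  case (Suc k)
  let ?G = "Gamma p phi (s + int k + 1)"
  have "Fprod p phi s (Suc k) $$ (i, 0) = (\<Sum>j<p. ?G $$ (i, j) * Fprod p phi s k $$ (j, 0))"
    using Fprod_carrier[of p phi s k] Suc.prems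
    by (simp add: Gamma_def scalar_prod_def lessThan_atLeast0)
  also have "\<dots> = xi p phi (s + int (Suc k) - int i) s"
  proof (cases "i = 0")
    case True
    have "(\<Sum>j<p. ?G $$ (i, j) * Fprod p phi s k $$ (j, 0))
        = (\<Sum>j<p. phi_ext p phi (j + 1) (s + int k + 1) * xi p phi (s + int k - int j) s)"
      by (rule sum.cong) (auto simp: True Gamma_def Suc.IH)
    then show ?thesis using True xi_recurrence[of p phi s k] by (simp add: ac_simps)
  next
    case False
    have "(\<Sum>j<p. ?G $$ (i, j) * Fprod p phi s k $$ (j, 0))
        = (\<Sum>j<p. if j = i - 1 then Fprod p phi s k $$ (j, 0) else 0)"
      by (rule sum.cong) (use False Suc.prems in \<open>auto simp: Gamma_def\<close>)
    also have "\<dots> = xi p phi (s + int k - int (i - 1)) s"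
      using Suc.IH Suc.prems by simp
    finally show ?thesis using False by (simp add: of_nat_diff algebra_simps)
  qed
  finally show ?case .
qed

lemma H_eq_xi:
  assumes "0 < p"
  shows "H p phi t s = xi p phi t s"
proof (cases "t > s")
  case True
  then have "H p phi t s = Fprod p phi s (nat (t - s)) $$ (0, 0)"
    by (simp add: H_def F_def)
  then show ?thesis
    using Fprod_first_column[OF assms, of phi s "nat (t - s)"] True by simp
qed (simp add: H_def xi_def)

theorem theorem2:
  fixes p :: nat and phi :: "nat \<Rightarrow> int \<Rightarrow> complex"
  assumes "p \<ge> 1"
  shows "(\<forall>s t. t \<ge> s - int p + 1 \<longrightarrow> H p phi t s = xi p phi t s)
       \<and> (\<forall>s t. t > s \<longrightarrow> H p phi t s =
            det (mat (nat (t - s)) (nat (t - s))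
              (\<lambda>(i, j). if j = i + 1 then -1
                        else if 1 \<le> int i - int j + 1 \<and> int i - int j + 1 \<le> int p
                             then phi (i - j + 1) (s + int i + 1)
                        else 0)))"
proof -
  have H_xi: "H p phi t s = xi p phi t s" for s t
    using assms by (simp add: H_eq_xi)
  have "(\<lambda>(i, j). if j = i + 1 then -1
                 else if 1 \<le> int i - int j + 1 \<and> int i - int j + 1 \<le> int p
                      then phi (i - j + 1) (s + int i + 1)
                 else 0) = Phi_entry p phi s" for s
    by (auto simp: Phi_entry_def phi_ext_def fun_eq_iff)
  moreover have "xi p phi t s = det (mat (nat (t - s)) (nat (t - s)) (Phi_entry p phi s))"
    if "t > s" for s t
    using that by (simp add: xi_def Phi_def Phi_entry_def)
  ultimately show ?thesis
    using H_xi by auto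
qed

end
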